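(* The identity matrix $\mathbb{1}_N$ (the barycenter of the set $\mathcal I$ of Ising matrices) is a fixed point of every affine bijection $\sigma:\mathcal{G}_N\to\mathcal{G}_N$.
   Context: $\mathcal{G}_N$ is the set of real symmetric positive semi-definite $N\times N$ matrices with unit diagonal; $\mathcal{I}$ is the set of matrices $\mathbf{s}\mathbf{s}^\top$ with $\mathbf{s}\in\{\pm1\}^N$. *)

theory Defs
  imports "HOL-Analysis.Analysis"
begin

definition elliptope :: "(real^'n^'n) set" where
  "elliptope = {A. transpose A = A \<and> (\<forall>x. 0 \<le> x \<bullet> (A *v x)) \<and> (\<forall>i. A $ i $ i = 1)}"

definition ising :: "(real^'n^'n) set" where
  "ising = {A. \<exists>s::real^'n. (\<forall>i. s $ i = 1 \<or> s $ i = -1) \<and> A = (\<chi> i j. s $ i * s $ j)}"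

definition affine_on :: "'a::real_vector set \<Rightarrow> ('a \<Rightarrow> 'b::real_vector) \<Rightarrow> bool" where
  "affine_on S f \<longleftrightarrow> (\<forall>x\<in>S. \<forall>y\<in>S. \<forall>t::real. 0 \<le> t \<and> t \<le> 1 \<longrightarrow>
      f ((1 - t) *\<^sub>R x + t *\<^sub>R y) = (1 - t) *\<^sub>R f x + t *\<^sub>R f y)"

end

theory Submission
  imports Defs
begin

text \<open>Let \<open>X = \<sigma> 1\<close> and \<open>s \<in> {\<plusminus>1}\<^sup>N\<close>. Every \<open>A \<in> \<G>\<^sub>N\<close> satisfies \<open>A \<le> N\<cdot>1\<close>, so
  \<open>1 = (1 - 1/N) B + (1/N) A\<close> with \<open>B = (N\<cdot>1 - A)/(N - 1) \<in> \<G>\<^sub>N\<close>. Taking \<open>A = \<sigma>\<inverse>(s s\<^sup>T)\<close>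
  and applying \<open>\<sigma>\<close> gives \<open>X = (1 - 1/N) \<sigma> B + (1/N) s s\<^sup>T\<close>, hence \<open>s\<^sup>T X s \<ge> N\<close>. Averaged over
  all sign vectors, \<open>s\<^sup>T X s\<close> equals \<open>tr X = N\<close>, so \<open>s\<^sup>T X s = N\<close> for every \<open>s\<close>; polarizing
  with the four sign vectors that differ in the coordinates \<open>k, l\<close> shows \<open>X\<^sub>k\<^sub>l = 0\<close>.\<close>

lemma quadratic_form_eq_double_sum:
  "v \<bullet> (A *v v) = (\<Sum>i\<in>UNIV. \<Sum>j\<in>UNIV. v$i * A$i$j * v$j)"
  by (simp add: inner_vec_def matrix_vector_mult_def sum_distrib_left mult.assoc)

lemma quadratic_form_symmetric:
  fixes A :: "real^'n^'n"
  assumes "transpose A = A"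
  shows "a \<bullet> (A *v b) = b \<bullet> (A *v a)"
  by (metis assms dot_lmul_matrix inner_commute transpose_matrix_vector)

lemma elliptopeD:
  assumes "A \<in> elliptope"
  shows "transpose A = A" and "0 \<le> x \<bullet> (A *v x)" and "A$i$i = 1"
  using assms by (auto simp: elliptope_def)

lemma mat_1_in_elliptope: "(mat 1 :: real^'n^'n) \<in> elliptope"
  unfolding elliptope_def by (simp add: matrix_vector_mul_lid) (simp add: mat_def)

lemma elliptope_entry_abs_le_1:
  fixes A :: "real^'n^'n"
  assumes A: "A \<in> elliptope"
  shows "\<bar>A$i$j\<bar> \<le> 1"
proof (cases "i = j")
  case True
  then show ?thesis using elliptopeD(3)[OF A] by simp
next
  case False
  have sym: "A$j$i = A$i$j"
    using elliptopeD(1)[OF A] by (metis transpose_def vec_lambda_beta)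
  have form: "(axis i 1 + c *\<^sub>R axis j 1) \<bullet> (A *v (axis i 1 + c *\<^sub>R axis j 1))
      = 1 + 2*c*A$i$j + c*c" for c :: real
    using False elliptopeD(3)[OF A]
    by (simp add: algebra_simps inner_axis' matrix_vector_mult_basis column_def sym)
  have "0 \<le> 2 + 2*A$i$j" using elliptopeD(2)[OF A, of "axis i 1 + 1 *\<^sub>R axis j 1"] form[of 1] by simp
  moreover have "0 \<le> 2 - 2*A$i$j"
    using elliptopeD(2)[OF A, of "axis i 1 + (-1) *\<^sub>R axis j 1"] form[of "-1"] by simp
  ultimately show ?thesis by linarith
qed

lemma elliptope_quadratic_form_le:
  fixes A :: "real^'n^'n"
  assumes A: "A \<in> elliptope"
  shows "v \<bullet> (A *v v) \<le> real CARD('n) * (v \<bullet> v)"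
proof -
  have entry: "v$i * A$i$j * v$j \<le> ((v$i)^2 + (v$j)^2)/2" for i j
  proof -
    have "v$i * A$i$j * v$j \<le> \<bar>v$i\<bar> * \<bar>A$i$j\<bar> * \<bar>v$j\<bar>"
      by (metis abs_ge_self abs_mult)
    also have "\<dots> \<le> \<bar>v$i\<bar> * 1 * \<bar>v$j\<bar>"
      by (intro mult_right_mono mult_left_mono elliptope_entry_abs_le_1 A) auto
    also have "\<dots> \<le> ((v$i)^2 + (v$j)^2)/2"
      using zero_le_power2[of "\<bar>v$i\<bar> - \<bar>v$j\<bar>"] by (simp add: power2_eq_square algebra_simps)
    finally show ?thesis .
  qed
  have "v \<bullet> (A *v v) \<le> (\<Sum>i\<in>UNIV. \<Sum>j\<in>UNIV. ((v$i)^2 + (v$j)^2)/2)"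
    unfolding quadratic_form_eq_double_sum by (intro sum_mono entry)
  also have "\<dots> = real CARD('n) * (\<Sum>j\<in>UNIV. (v$j)^2)"
    by (simp add: sum.distrib add_divide_distrib sum_divide_distrib[symmetric]
        sum_distrib_left[symmetric])
  also have "\<dots> = real CARD('n) * (v \<bullet> v)"
    by (simp add: inner_vec_def power2_eq_square)
  finally show ?thesis .
qed

lemma elliptope_complement_in_elliptope:
  fixes A :: "real^'n^'n"
  assumes A: "A \<in> elliptope" and N: "CARD('n) \<ge> 2"
  shows "(1 / (real CARD('n) - 1)) *\<^sub>R (real CARD('n) *\<^sub>R mat 1 - A) \<in> elliptope"
proof -
  let ?N = "real CARD('n)"
  let ?B = "(1 / (?N - 1)) *\<^sub>R (?N *\<^sub>R mat 1 - A)"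
  have pos: "?N - 1 > 0" using N by simp
  have "transpose ?B = ?B"
    using elliptopeD(1)[OF A] by (simp add: transpose_scalar transpose_def vec_eq_iff mat_def)
  moreover have "0 \<le> x \<bullet> (?B *v x)" for x
  proof -
    have "x \<bullet> (?B *v x) = (?N * (x \<bullet> x) - x \<bullet> (A *v x)) / (?N - 1)"
      by (simp add: scaleR_matrix_vector_assoc[symmetric] matrix_vector_mult_diff_rdistrib
          inner_diff_right divide_simps)
    then show ?thesis using elliptope_quadratic_form_le[OF A, of x] pos by simp
  qed
  moreover have "?B $ i $ i = 1" for i
    using pos elliptopeD(3)[OF A] by (simp add: mat_def divide_simps)
  ultimately show ?thesis unfolding elliptope_def by blast
qed

lemma mat_1_eq_convex_combination:
  fixes A :: "real^'n^'n"
  assumes "CARD('n) \<ge> 2"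
  defines "B \<equiv> (1 / (real CARD('n) - 1)) *\<^sub>R (real CARD('n) *\<^sub>R mat 1 - A)"
  shows "mat 1 = (1 - 1 / real CARD('n)) *\<^sub>R B + (1 / real CARD('n)) *\<^sub>R A"
  using assms by (simp add: vec_eq_iff mat_def field_simps)

definition sign_vectors :: "(real^'n) set" where
  "sign_vectors = {s. \<forall>i. s$i = 1 \<or> s$i = -1}"

lemma finite_sign_vectors: "finite (sign_vectors :: (real^'n) set)"
proof -
  have "sign_vectors \<subseteq> range (\<lambda>b::'n \<Rightarrow> bool. \<chi> i. if b i then 1 else (-1::real))"
  proof
    fix s :: "real^'n"
    assume "s \<in> sign_vectors"
    then have "s = (\<chi> i. if s$i = 1 then 1 else -1)" by (auto simp: sign_vectors_def vec_eq_iff)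
    then show "s \<in> range (\<lambda>b::'n \<Rightarrow> bool. \<chi> i. if b i then 1 else (-1::real))"
      by (intro image_eqI[where x="\<lambda>i. s$i = 1"]) auto
  qed
  then show ?thesis by (rule finite_subset) simp
qed

lemma sign_vector_component_sq: "s \<in> sign_vectors \<Longrightarrow> s$i * s$i = 1"
  by (auto simp: sign_vectors_def) (metis mult_1 mult_minus1 minus_minus)

lemma sign_vector_inner_self: "s \<in> sign_vectors \<Longrightarrow> s \<bullet> s = real CARD('n)"
  for s :: "real^'n"
  by (simp add: inner_vec_def sign_vector_component_sq)

lemma sum_sign_vectors_product:
  assumes "i \<noteq> j"
  shows "(\<Sum>s\<in>(sign_vectors :: (real^'n) set). s$i * s$j) = 0"
proof -
  define flip where "flip = (\<lambda>s::real^'n. \<chi> k. if k = i then - s$k else s$k)"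
  have flip_flip: "flip (flip s) = s" for s by (simp add: flip_def vec_eq_iff)
  have flip_sign: "flip s \<in> sign_vectors" if "s \<in> sign_vectors" for s
    using that unfolding flip_def sign_vectors_def by force
  have inj: "inj_on flip sign_vectors" by (metis flip_flip inj_onI)
  have img: "flip ` sign_vectors = sign_vectors"
    using flip_sign flip_flip by (metis image_subset_iff subsetI subset_antisym image_eqI)
  have "(\<Sum>s\<in>sign_vectors. s$i * s$j) = (\<Sum>s\<in>flip ` sign_vectors. s$i * s$j)"
    by (simp add: img)
  also have "\<dots> = (\<Sum>s\<in>sign_vectors. (flip s)$i * (flip s)$j)"
    by (simp add: sum.reindex[OF inj])
  also have "\<dots> = - (\<Sum>s\<in>sign_vectors. s$i * s$j)"
    using assms by (simp add: flip_def sum_negf)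
  finally show ?thesis by simp
qed

lemma sum_sign_vectors_quadratic_form:
  fixes X :: "real^'n^'n"
  assumes diag: "\<And>i. X$i$i = 1"
  shows "(\<Sum>s\<in>sign_vectors. s \<bullet> (X *v s))
    = real CARD('n) * real (card (sign_vectors :: (real^'n) set))"
proof -
  have summand: "X$i$j * (\<Sum>s\<in>(sign_vectors :: (real^'n) set). s$i * s$j)
      = (if j = i then real (card (sign_vectors :: (real^'n) set)) else 0)" for i j
    by (cases "i = j") (simp_all add: sum_sign_vectors_product diag sign_vector_component_sq)
  have "(\<Sum>s\<in>(sign_vectors :: (real^'n) set). s \<bullet> (X *v s))
      = (\<Sum>s\<in>sign_vectors. \<Sum>i\<in>UNIV. \<Sum>j\<in>UNIV. s$i * X$i$j * s$j)"
    by (simp add: quadratic_form_eq_double_sum)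
  also have "\<dots> = (\<Sum>i\<in>UNIV. \<Sum>j\<in>UNIV. X$i$j * (\<Sum>s\<in>sign_vectors. s$i * s$j))"
    by (subst sum.swap, subst sum.swap)
      (simp add: sum_distrib_left mult_ac sum.swap[of _ sign_vectors])
  also have "\<dots> = real CARD('n) * real (card (sign_vectors :: (real^'n) set))"
    by (simp only: summand sum.delta' finite_UNIV) simp
  finally show ?thesis .
qed

lemma quadratic_form_eq_on_sign_vectors:
  fixes X :: "real^'n^'n"
  assumes diag: "\<And>i. X$i$i = 1"
    and ge: "\<And>s. s \<in> sign_vectors \<Longrightarrow> real CARD('n) \<le> s \<bullet> (X *v s)"
    and s: "s \<in> sign_vectors"
  shows "s \<bullet> (X *v s) = real CARD('n)"
proof -
  have "(\<Sum>s\<in>sign_vectors. s \<bullet> (X *v s) - real CARD('n)) = 0"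
    by (simp add: sum_subtractf sum_sign_vectors_quadratic_form[OF diag])
  then show ?thesis
    using sum_nonneg_eq_0_iff[OF finite_sign_vectors, of "\<lambda>s. s \<bullet> (X *v s) - real CARD('n)"]
      ge s by auto
qed

lemma outer_sign_vector_in_ising:
  "s \<in> sign_vectors \<Longrightarrow> (\<chi> i j. s$i * s$j) \<in> ising"
  by (auto simp: ising_def sign_vectors_def)

lemma outer_product_mult_vector: "(\<chi> i j. s$i * s$j) *v v = (s \<bullet> v) *\<^sub>R s"
  for s v :: "real^'n"
  by (simp add: vec_eq_iff matrix_vector_mult_def inner_vec_def sum_distrib_left mult_ac)

lemma ising_subset_elliptope: "ising \<subseteq> elliptope"
proof
  fix M :: "real^'n^'n"
  assume "M \<in> ising"
  then obtain s where s: "s \<in> sign_vectors" and M: "M = (\<chi> i j. s$i * s$j)"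
    by (auto simp: ising_def sign_vectors_def)
  show "M \<in> elliptope"
    using sign_vector_component_sq[OF s]
    by (auto simp: M elliptope_def outer_product_mult_vector transpose_def vec_eq_iff
        mult.commute inner_commute[of _ s])
qed

lemma entry_eq_alternating_quadratic_forms:
  fixes X :: "real^'n^'n" and k l :: 'n
  assumes X: "transpose X = X"
  defines "e \<equiv> (\<chi> i. 1) :: real^'n" and "u \<equiv> axis k 1 :: real^'n" and "w \<equiv> axis l 1 :: real^'n"
  shows "e \<bullet> (X *v e) - (e - 2 *\<^sub>R u) \<bullet> (X *v (e - 2 *\<^sub>R u))
      - (e - 2 *\<^sub>R w) \<bullet> (X *v (e - 2 *\<^sub>R w))
      + (e - 2 *\<^sub>R u - 2 *\<^sub>R w) \<bullet> (X *v (e - 2 *\<^sub>R u - 2 *\<^sub>R w)) = 8 * X$k$l"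
proof -
  have sym: "u \<bullet> (X *v e) = e \<bullet> (X *v u)" "w \<bullet> (X *v e) = e \<bullet> (X *v w)"
    "w \<bullet> (X *v u) = u \<bullet> (X *v w)"
    using quadratic_form_symmetric[OF X] by blast+
  have "u \<bullet> (X *v w) = X$k$l"
    by (simp add: u_def w_def matrix_vector_mult_basis column_def inner_axis')
  then show ?thesis
    by (simp add: algebra_simps inner_diff_left inner_diff_right sym)
qed

lemma offdiag_zero_if_quadratic_form_const:
  fixes X :: "real^'n^'n"
  assumes X: "transpose X = X" and kl: "k \<noteq> l"
    and const: "\<And>s. s \<in> sign_vectors \<Longrightarrow> s \<bullet> (X *v s) = c"
  shows "X$k$l = 0"
proof -
  let ?e = "(\<chi> i. 1) :: real^'n"
  let ?u = "axis k 1 :: real^'n" and ?w = "axis l 1 :: real^'n"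
  have "?e \<in> sign_vectors" "?e - 2 *\<^sub>R ?u \<in> sign_vectors" "?e - 2 *\<^sub>R ?w \<in> sign_vectors"
    "?e - 2 *\<^sub>R ?u - 2 *\<^sub>R ?w \<in> sign_vectors"
    using kl by (auto simp: sign_vectors_def axis_def)
  then show ?thesis
    using entry_eq_alternating_quadratic_forms[OF X, of k l] const by simp
qed

lemma affine_bij_quadratic_form_ge:
  fixes \<sigma> :: "real^'n^'n \<Rightarrow> real^'n^'n"
  assumes affine: "affine_on elliptope \<sigma>" and bij: "bij_betw \<sigma> elliptope elliptope"
    and N: "CARD('n) \<ge> 2" and s: "s \<in> sign_vectors"
  shows "real CARD('n) \<le> s \<bullet> (\<sigma> (mat 1) *v s)"
proof -
  let ?N = "real CARD('n)"
  let ?M = "(\<chi> i j. s$i * s$j) :: real^'n^'n"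
  have "?M \<in> elliptope" using outer_sign_vector_in_ising[OF s] ising_subset_elliptope by blast
  then obtain A where A: "A \<in> elliptope" "\<sigma> A = ?M"
    using bij by (metis bij_betw_def imageE)
  define B where "B = (1 / (?N - 1)) *\<^sub>R (?N *\<^sub>R mat 1 - A)"
  have B: "B \<in> elliptope" unfolding B_def by (rule elliptope_complement_in_elliptope[OF A(1) N])
  have "\<sigma> (mat 1) = \<sigma> ((1 - 1/?N) *\<^sub>R B + (1/?N) *\<^sub>R A)"
    using mat_1_eq_convex_combination[OF N, of A] by (simp add: B_def)
  also have "\<dots> = (1 - 1/?N) *\<^sub>R \<sigma> B + (1/?N) *\<^sub>R ?M"
    using affine B A N unfolding affine_on_def by simp
  finally have "s \<bullet> (\<sigma> (mat 1) *v s) = (1 - 1/?N) * (s \<bullet> (\<sigma> B *v s)) + ?N"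
    by (simp add: matrix_vector_mult_add_rdistrib scaleR_matrix_vector_assoc[symmetric]
        inner_add_right outer_product_mult_vector sign_vector_inner_self[OF s])
  moreover have "0 \<le> s \<bullet> (\<sigma> B *v s)" using elliptopeD(2) bij_betw_apply[OF bij B] by blast
  moreover have "0 \<le> 1 - 1/?N" using N by simp
  ultimately show ?thesis by simp
qed

theorem lemma6:
  fixes \<sigma> :: "real^'n^'n \<Rightarrow> real^'n^'n"
  assumes "affine_on elliptope \<sigma>"
    and "bij_betw \<sigma> elliptope elliptope"
  shows "\<sigma> (mat 1) = mat 1"
proof -
  let ?X = "\<sigma> (mat 1)"
  have X: "?X \<in> elliptope" using assms(2) mat_1_in_elliptope by (rule bij_betw_apply)
  have "?X$k$l = 0" if kl: "k \<noteq> l" for k l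
  proof -
    have "CARD('n) \<ge> 2"
      using kl card_2_iff'[of "{k, l}"] card_mono[of UNIV "{k, l}"] by auto
    then have "s \<bullet> (?X *v s) = real CARD('n)" if "s \<in> sign_vectors" for s
      using quadratic_form_eq_on_sign_vectors elliptopeD(3)[OF X]
        affine_bij_quadratic_form_ge[OF assms] that by blast
    then show ?thesis using offdiag_zero_if_quadratic_form_const elliptopeD(1)[OF X] kl by blast
  qed
  then show ?thesis using elliptopeD(3)[OF X] by (auto simp: vec_eq_iff mat_def)
qed

end
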